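(* Let $X$ be a random variable taking values in a set $\mathcal{X}$ and $Y \in [0,1]$ a target outcome. Let $\mathcal{F}$ be a class of functions $\mathcal{X} \to [0,1]$, $\alpha \ge 0$, and let $S_1, \dots, S_K$ be an $\alpha$-multicalibrated partition with respect to $\mathcal{F}$ and $Y$. Then for all $f \in \mathcal{F}$ and $k \in [K]$, $$\mathbb{E}_k\left[(Y - \mathbb{E}_k[Y])^2\right] \le \mathbb{E}_k\left[(Y - f(X))^2\right] + 2\alpha.$$
   Context: $\mathbb{E}_k$ denotes expectation conditional on $\{X \in S_k\}$ (assumed to have positive probability). A set $S \subseteq \mathcal{X}$ is $\alpha$-indistinguishable with respect to $\mathcal{F}$ and $Y$ if $|\mathrm{Cov}(f(X), Y \mid X \in S)| \le \alpha$ for all $f \in \mathcal{F}$. Sets $S_1, \dots, S_K$ form an $\alpha$-multicalibrated partition with respect to $\mathcal{F}$ and $Y$ if they partition $\mathcal{X}$ and each $S_k$ is $\alpha$-indistinguishable with respect to $\mathcal{F}$ and $Y$. *)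

theory Defs
  imports "HOL-Probability.Probability"
begin

text \<open>Conditional expectation of g given the event A (assumed of positive probability):
  E[g | A] = E[1_A g] / P(A).\<close>
definition cond_exp_ev :: "'a measure \<Rightarrow> 'a set \<Rightarrow> ('a \<Rightarrow> real) \<Rightarrow> real" where
  "cond_exp_ev M A g = (\<integral>\<omega>. indicator A \<omega> * g \<omega> \<partial>M) / measure M A"

definition cond_cov :: "'a measure \<Rightarrow> 'a set \<Rightarrow> ('a \<Rightarrow> real) \<Rightarrow> ('a \<Rightarrow> real) \<Rightarrow> real" where
  "cond_cov M A g h = cond_exp_ev M A (\<lambda>\<omega>. g \<omega> * h \<omega>) - cond_exp_ev M A g * cond_exp_ev M A h"

definition indistinguishable ::
  "'a measure \<Rightarrow> ('a \<Rightarrow> 'b) \<Rightarrow> ('a \<Rightarrow> real) \<Rightarrow> ('b \<Rightarrow> real) set \<Rightarrow> real \<Rightarrow> 'b set \<Rightarrow> bool" where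
  "indistinguishable M X Y F \<alpha> S \<longleftrightarrow>
     (\<forall>f\<in>F. \<bar>cond_cov M (X -` S \<inter> space M) (\<lambda>\<omega>. f (X \<omega>)) Y\<bar> \<le> \<alpha>)"

definition multicalibrated_partition ::
  "'a measure \<Rightarrow> ('a \<Rightarrow> 'b) \<Rightarrow> ('a \<Rightarrow> real) \<Rightarrow> ('b \<Rightarrow> real) set \<Rightarrow> real \<Rightarrow> 'b set
     \<Rightarrow> nat \<Rightarrow> (nat \<Rightarrow> 'b set) \<Rightarrow> bool" where
  "multicalibrated_partition M X Y F \<alpha> \<X> K S \<longleftrightarrow>
     (\<forall>k\<in>{1..K}. S k \<subseteq> \<X>) \<and> (\<Union>k\<in>{1..K}. S k) = \<X> \<and>
     (\<forall>j\<in>{1..K}. \<forall>k\<in>{1..K}. j \<noteq> k \<longrightarrow> S j \<inter> S k = {}) \<and>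
     (\<forall>k\<in>{1..K}. indistinguishable M X Y F \<alpha> (S k))"

end

theory Submission
  imports Defs
begin

(* Conditioning on the event X \<in> S_k is integration against the uniform measure on that
   event, which is a probability measure. For any predictor g, expanding the squares gives
     E[(Y - g)^2] = Var Y + Var g + (E Y - E g)^2 - 2 Cov(g, Y),
   so Var Y \<le> E[(Y - g)^2] + 2 Cov(g, Y), and indistinguishability of S_k bounds the
   covariance term by \<alpha> when g = f \<circ> X. *)

lemma integrable_mult_if_square_integrable:
  fixes f g :: "'a \<Rightarrow> real"
  assumes [measurable]: "f \<in> borel_measurable M" "g \<in> borel_measurable M"
    and "integrable M (\<lambda>x. (f x)\<^sup>2)" "integrable M (\<lambda>x. (g x)\<^sup>2)"
  shows "integrable M (\<lambda>x. f x * g x)"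
proof (rule Bochner_Integration.integrable_bound)
  show "integrable M (\<lambda>x. (f x)\<^sup>2 + (g x)\<^sup>2)"
    using assms(3,4) by (rule Bochner_Integration.integrable_add)
  have "\<bar>f x * g x\<bar> \<le> (f x)\<^sup>2 + (g x)\<^sup>2" for x
  proof -
    have "2 * \<bar>f x * g x\<bar> \<le> (f x)\<^sup>2 + (g x)\<^sup>2"
      using sum_squares_bound[of "\<bar>f x\<bar>" "\<bar>g x\<bar>"] by (simp add: abs_mult mult.assoc)
    then show ?thesis
      using abs_ge_zero[of "f x * g x"] by linarith
  qed
  then show "AE x in M. norm (f x * g x) \<le> norm ((f x)\<^sup>2 + (g x)\<^sup>2)"
    by simp
qed measurable

lemma (in prob_space) variance_le_mean_square_error_add_covariance:
  fixes Y g :: "'a \<Rightarrow> real"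
  assumes [measurable]: "Y \<in> borel_measurable M" "g \<in> borel_measurable M"
    and Y2: "integrable M (\<lambda>x. (Y x)\<^sup>2)" and g2: "integrable M (\<lambda>x. (g x)\<^sup>2)"
  shows "variance Y \<le> expectation (\<lambda>x. (Y x - g x)\<^sup>2)
           + 2 * (expectation (\<lambda>x. g x * Y x) - expectation g * expectation Y)"
proof -
  have [simp]: "integrable M Y" "integrable M g" "integrable M (\<lambda>x. g x * Y x)"
    using Y2 g2 by (auto intro: square_integrable_imp_integrable integrable_mult_if_square_integrable)
  have mse: "expectation (\<lambda>x. (Y x - g x)\<^sup>2)
      = expectation (\<lambda>x. (Y x)\<^sup>2) - 2 * expectation (\<lambda>x. g x * Y x) + expectation (\<lambda>x. (g x)\<^sup>2)"
  proof -
    have "(\<lambda>x. (Y x - g x)\<^sup>2) = (\<lambda>x. (Y x)\<^sup>2 - 2 * (g x * Y x) + (g x)\<^sup>2)"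
      by (simp add: fun_eq_iff power2_diff)
    then show ?thesis
      using Y2 g2 by simp
  qed
  have "(expectation g)\<^sup>2 \<le> expectation (\<lambda>x. (g x)\<^sup>2)"
    using variance_positive[of g] variance_eq[of g] g2 by simp
  moreover have "0 \<le> (expectation g - expectation Y)\<^sup>2"
    by simp
  ultimately show ?thesis
    using variance_eq[of Y] Y2 mse by (simp add: power2_diff)
qed

lemma uniform_measure_eq_density_real:
  assumes "emeasure M A \<noteq> \<infinity>" "measure M A > 0"
  shows "uniform_measure M A = density M (\<lambda>x. ennreal (indicator A x / measure M A))"
proof -
  have "indicator A x / emeasure M A = ennreal (indicator A x / measure M A)" for x :: 'a
    using assms by (simp add: emeasure_eq_ennreal_measure divide_ennreal flip: ennreal_indicator)
  then show ?thesis
    unfolding uniform_measure_def by simp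
qed

lemma integrable_uniform_measure:
  fixes f :: "'a \<Rightarrow> real"
  assumes "A \<in> sets M" "emeasure M A \<noteq> \<infinity>" "measure M A > 0" "integrable M f"
  shows "integrable (uniform_measure M A) f"
  unfolding uniform_measure_eq_density_real[OF assms(2,3)]
  using assms integrable_mult_indicator[OF assms(1,4)]
  by (subst integrable_density) auto

lemma cond_exp_ev_eq_integral_uniform_measure:
  fixes f :: "'a \<Rightarrow> real"
  assumes "A \<in> sets M" "emeasure M A \<noteq> \<infinity>" "measure M A > 0" "f \<in> borel_measurable M"
  shows "cond_exp_ev M A f = (\<integral>x. f x \<partial>uniform_measure M A)"
  unfolding uniform_measure_eq_density_real[OF assms(2,3)] cond_exp_ev_def
  using assms by (subst integral_density) auto

lemma cond_variance_le_cond_mean_square_error_add_cond_cov: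
  fixes Y g :: "'a \<Rightarrow> real"
  assumes "finite_measure M" "A \<in> sets M" "measure M A > 0"
    and [measurable]: "Y \<in> borel_measurable M" "g \<in> borel_measurable M"
    and "integrable M (\<lambda>\<omega>. (Y \<omega>)\<^sup>2)" "integrable M (\<lambda>\<omega>. (g \<omega>)\<^sup>2)"
  shows "cond_exp_ev M A (\<lambda>\<omega>. (Y \<omega> - cond_exp_ev M A Y)\<^sup>2)
           \<le> cond_exp_ev M A (\<lambda>\<omega>. (Y \<omega> - g \<omega>)\<^sup>2) + 2 * cond_cov M A g Y"
proof -
  have finite: "emeasure M A \<noteq> \<infinity>"
    using assms(1) by (simp add: finite_measure.emeasure_finite)
  then interpret U: prob_space "uniform_measure M A"
    using assms(3) by (intro prob_space_uniform_measure) (auto simp: emeasure_eq_ennreal_measure)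
  have E: "cond_exp_ev M A h = U.expectation h" if "h \<in> borel_measurable M" for h
    using cond_exp_ev_eq_integral_uniform_measure[OF assms(2) finite assms(3) that] .
  have "U.variance Y \<le> U.expectation (\<lambda>x. (Y x - g x)\<^sup>2)
           + 2 * (U.expectation (\<lambda>x. g x * Y x) - U.expectation g * U.expectation Y)"
    using assms by (intro U.variance_le_mean_square_error_add_covariance)
      (auto intro: integrable_uniform_measure[OF assms(2) finite assms(3)])
  then show ?thesis
    unfolding cond_cov_def by (simp add: E)
qed

theorem lemma1:
  fixes M :: "'a measure" and N :: "'b measure"
    and X :: "'a \<Rightarrow> 'b" and Y :: "'a \<Rightarrow> real"
    and F :: "('b \<Rightarrow> real) set" and \<alpha> :: real
    and K :: nat and S :: "nat \<Rightarrow> 'b set"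
  assumes "prob_space M"
    and "X \<in> measurable M N"
    and "Y \<in> borel_measurable M"
    and "\<And>\<omega>. \<omega> \<in> space M \<Longrightarrow> 0 \<le> Y \<omega> \<and> Y \<omega> \<le> 1"
    and "\<And>f. f \<in> F \<Longrightarrow> f \<in> borel_measurable N"
    and "\<And>f x. f \<in> F \<Longrightarrow> x \<in> space N \<Longrightarrow> 0 \<le> f x \<and> f x \<le> 1"
    and "\<alpha> \<ge> 0"
    and "\<And>k. k \<in> {1..K} \<Longrightarrow> S k \<in> sets N"
    and "\<And>k. k \<in> {1..K} \<Longrightarrow> measure M (X -` S k \<inter> space M) > 0"
    and "multicalibrated_partition M X Y F \<alpha> (space N) K S"
  shows "\<forall>f\<in>F. \<forall>k\<in>{1..K}.
    cond_exp_ev M (X -` S k \<inter> space M)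
       (\<lambda>\<omega>. (Y \<omega> - cond_exp_ev M (X -` S k \<inter> space M) Y)\<^sup>2)
    \<le> cond_exp_ev M (X -` S k \<inter> space M) (\<lambda>\<omega>. (Y \<omega> - f (X \<omega>))\<^sup>2) + 2 * \<alpha>"
proof (intro ballI)
  fix f k assume f: "f \<in> F" and k: "k \<in> {1..K}"
  interpret prob_space M by fact
  define A where "A = X -` S k \<inter> space M"
  have A: "A \<in> sets M"
    unfolding A_def using assms(2) assms(8)[OF k] by (rule measurable_sets)
  have fX[measurable]: "(\<lambda>\<omega>. f (X \<omega>)) \<in> borel_measurable M"
    using measurable_comp[OF assms(2) assms(5)[OF f]] by (simp add: comp_def)
  have Y2: "integrable M (\<lambda>\<omega>. (Y \<omega>)\<^sup>2)"
    using assms(3,4) by (intro integrable_const_bound[where B=1]) (auto simp: power_le_one)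
  have fX2: "integrable M (\<lambda>\<omega>. (f (X \<omega>))\<^sup>2)"
    using assms(6)[OF f] measurable_space[OF assms(2)]
    by (intro integrable_const_bound[where B=1]) (auto simp: power_le_one)
  have "\<bar>cond_cov M A (\<lambda>\<omega>. f (X \<omega>)) Y\<bar> \<le> \<alpha>"
    using assms(10) f k unfolding multicalibrated_partition_def indistinguishable_def A_def by blast
  then show "cond_exp_ev M A (\<lambda>\<omega>. (Y \<omega> - cond_exp_ev M A Y)\<^sup>2)
      \<le> cond_exp_ev M A (\<lambda>\<omega>. (Y \<omega> - f (X \<omega>))\<^sup>2) + 2 * \<alpha>"
    using cond_variance_le_cond_mean_square_error_add_cond_cov[OF finite_measure_axioms A
        assms(9)[OF k, folded A_def] assms(3) fX Y2 fX2]
    by linarith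
qed

end
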